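(* Let $d\geq 3$ and $1\leq k\leq d-2$, let $P\subset\mathbb R^d$ be a $k$-simplicial $d$-polytope with a simplex facet $S$ in bounded position, and let $\mathcal F,\mathcal N\subseteq\operatorname{adj}(S)$ be disjoint with $\mathcal F$ nonsimple. Then for every $v\in V_S(\mathcal F,\mathcal N;P)$ the polytope $\operatorname{conv}(P\cup\{v\})$ is $k$-simplicial.
   Context: A polytope is $k$-simplicial if all its $k$-dimensional faces are $k$-simplices. For a facet $F$ of a $d$-polytope $P\subset\mathbb R^d$ let $H_F=\{x:\langle x,a_F\rangle=\ell_F\}$ be its affine hull, oriented so that $P\subseteq\{x:\langle x,a_F\rangle\geq\ell_F\}$; put $H_F^+=\{x:\langle x,a_F\rangle>\ell_F\}$, $H_F^-=\{x:\langle x,a_F\rangle<\ell_F\}$. Two facets are adjacent if they share a ridge; $\operatorname{adj}(S)$ is the set of facets adjacent to $S$. A simplex facet is a facet combinatorially equivalent to a $(d-1)$-simplex. A facet $S$ is in bounded position if for every set of $d$ facets in $\operatorname{adj}(S)$ their hyperplanes intersect in a point of $H_S^-$. A subset $\mathcal F\subseteq\operatorname{adj}(S)$ is nonsimple if there is no pair of adjacent facets $G,G'\in\mathcal F$ having a common $(d-3)$-face with $S$. For disjoint $\mathcal F,\mathcal N\subseteq\operatorname{adj}(S)$, $V_S(\mathcal F,\mathcal N;P)$ is the set of points lying in $H_F^-$ for $F\in\mathcal N\cup\{S\}$, in $H_F$ for $F\in\mathcal F$, and in $H_F^+$ for all other facets $F$ of $P$. *)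

theory Defs
  imports "HOL-Analysis.Analysis"
begin

definition k_simplicial :: "nat \<Rightarrow> 'a::euclidean_space set \<Rightarrow> bool" where
  "k_simplicial k P \<longleftrightarrow> (\<forall>F. F face_of P \<and> aff_dim F = int k \<longrightarrow> (int k) simplex F)"

definition facet_hyp :: "'a::euclidean_space set \<Rightarrow> 'a set" where
  "facet_hyp F = affine hull F"

definition facet_plus :: "'a::euclidean_space set \<Rightarrow> 'a set \<Rightarrow> 'a set" where
  "facet_plus P F = {x. \<exists>a l. a \<noteq> 0 \<and> affine hull F = {y. a \<bullet> y = l}
       \<and> P \<subseteq> {y. a \<bullet> y \<ge> l} \<and> a \<bullet> x > l}"

definition facet_minus :: "'a::euclidean_space set \<Rightarrow> 'a set \<Rightarrow> 'a set" where
  "facet_minus P F = {x. \<exists>a l. a \<noteq> 0 \<and> affine hull F = {y. a \<bullet> y = l}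
       \<and> P \<subseteq> {y. a \<bullet> y \<ge> l} \<and> a \<bullet> x < l}"

definition adjacent_facets :: "'a::euclidean_space set \<Rightarrow> 'a set \<Rightarrow> 'a set \<Rightarrow> bool" where
  "adjacent_facets P F G \<longleftrightarrow> F facet_of P \<and> G facet_of P \<and> F \<noteq> G
     \<and> aff_dim (F \<inter> G) = aff_dim P - 2"

definition adj :: "'a::euclidean_space set \<Rightarrow> 'a set \<Rightarrow> 'a set set" where
  "adj P S = {F. adjacent_facets P S F}"

definition simplex_facet :: "'a::euclidean_space set \<Rightarrow> 'a set \<Rightarrow> bool" where
  "simplex_facet P S \<longleftrightarrow> S facet_of P \<and> (aff_dim P - 1) simplex S"

definition bounded_position :: "'a::euclidean_space set \<Rightarrow> 'a set \<Rightarrow> bool" where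
  "bounded_position P S \<longleftrightarrow>
     (\<forall>G. G \<subseteq> adj P S \<and> card G = DIM('a) \<longrightarrow>
        (\<exists>p. \<Inter> (facet_hyp ` G) = {p} \<and> p \<in> facet_minus P S))"

definition nonsimple :: "'a::euclidean_space set \<Rightarrow> 'a set \<Rightarrow> 'a set set \<Rightarrow> bool" where
  "nonsimple P S FF \<longleftrightarrow> FF \<subseteq> adj P S \<and>
     \<not> (\<exists>G\<in>FF. \<exists>G'\<in>FF. adjacent_facets P G G' \<and>
          (\<exists>K. K face_of P \<and> aff_dim K = int DIM('a) - 3 \<and> K \<subseteq> G \<and> K \<subseteq> G' \<and> K \<subseteq> S))"

definition V_region :: "'a::euclidean_space set \<Rightarrow> 'a set \<Rightarrow> 'a set set \<Rightarrow> 'a set set \<Rightarrow> 'a set" where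
  "V_region P S FF NN = {x.
     (\<forall>F \<in> insert S NN. x \<in> facet_minus P F) \<and>
     (\<forall>F \<in> FF. x \<in> facet_hyp F) \<and>
     (\<forall>F. F facet_of P \<and> F \<notin> insert S (NN \<union> FF) \<longrightarrow> x \<in> facet_plus P F)}"

end

theory Submission
  imports Defs
begin

(* A k-face F of conv(P \<union> {v}) either avoids v, and is then a k-face of P, or is
   the convex hull of v and the face G = F \<inter> P of P.  In the second case F is a
   k-simplex as soon as v is not in the affine hull of G: then G is a (k-1)-face of P,
   which lies in a k-face of P and is therefore a simplex.
   The position of v excludes v \<in> aff G for every nonempty face G of P of dimension at
   most d - 2.  Such a G lies in two adjacent facets F1, F2; v on both hyperplanes
   forces F1, F2 \<in> FF.  If F1 and F2 met the simplex S in different ridges of S,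
   these would share a (d-3)-face of S lying in F1, F2 and S, which nonsimplicity
   forbids.  So S \<inter> F1 = S \<inter> F2 is (d-2)-dimensional, its affine hull is
   aff F1 \<inter> aff F2, and hence v \<in> aff S, contradicting v \<in> H_S^-. *)

lemma face_of_polytope_superface_aff_dim:
  fixes P G :: "'a::euclidean_space set"
  assumes "polytope P" "G face_of P" "G \<noteq> {}" "aff_dim G \<le> m" "m \<le> aff_dim P"
  shows "\<exists>H. H face_of P \<and> G \<subseteq> H \<and> aff_dim H = m"
  using assms(4,5)
proof (induction "nat (aff_dim P - m)" arbitrary: m)
  case 0
  then have "m = aff_dim P"
    by simp
  moreover have "P face_of P"
    using assms(1) face_of_refl polytope_imp_convex by blast
  ultimately show ?case
    using assms(2) face_of_imp_subset by blast
next
  case (Suc n)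
  have "n = nat (aff_dim P - (m + 1))"
    using Suc.hyps(2) by simp
  then obtain H where H: "H face_of P" "G \<subseteq> H" "aff_dim H = m + 1"
    using Suc.hyps(1) Suc.prems(1) Suc.hyps(2) by fastforce
  show ?case
  proof (cases "aff_dim G = m")
    case True
    then show ?thesis
      using assms(2) by blast
  next
    case False
    have "G face_of H"
      using face_of_subset[OF assms(2) H(2) face_of_imp_subset[OF H(1)]] .
    moreover have "G \<noteq> H"
      using False Suc.prems(1) H(3) by auto
    moreover have "polyhedron H"
      using face_of_polytope_polytope[OF assms(1) H(1)] polytope_imp_polyhedron by blast
    ultimately obtain F where "F facet_of H" "G \<subseteq> F"
      using face_of_polyhedron_subset_facet assms(3) by metis
    then show ?thesis
      using H face_of_trans[of F H P] unfolding facet_of_def by auto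
  qed
qed

lemma face_of_simplex_imp_simplex:
  assumes "n simplex S" "F face_of S"
  shows "(aff_dim F) simplex F"
proof -
  obtain C where C: "\<not> affine_dependent C" "S = convex hull C"
    using assms(1) unfolding simplex_def by blast
  then obtain c where c: "c \<subseteq> C" "F = convex hull c"
    using assms(2) face_of_convex_hull_affine_independent by blast
  have c_indep: "\<not> affine_dependent c"
    using C(1) c(1) affine_dependent_subset by blast
  have "aff_dim F = aff_dim c"
    by (simp add: c(2) aff_dim_convex_hull)
  then have "int (card c) = aff_dim F + 1"
    using aff_dim_affine_independent[OF c_indep] by simp
  then show ?thesis
    using c(2) c_indep simplex_convex_hull by blast
qed

lemma k_simplicial_face_simplex:
  fixes P G :: "'a::euclidean_space set"
  assumes "polytope P" "k_simplicial k P" "G face_of P" "G \<noteq> {}"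
    and "aff_dim G \<le> int k" "int k \<le> aff_dim P"
  shows "(aff_dim G) simplex G"
proof -
  obtain H where H: "H face_of P" "G \<subseteq> H" "aff_dim H = int k"
    using face_of_polytope_superface_aff_dim[OF assms(1,3-6)] by blast
  then have "int k simplex H"
    using assms(2) unfolding k_simplicial_def by blast
  moreover have "G face_of H"
    using H assms(3) face_of_imp_subset face_of_subset by blast
  ultimately show ?thesis
    by (rule face_of_simplex_imp_simplex)
qed

lemma face_of_convex_hull_eq_convex_hull_Int:
  fixes S :: "'a::euclidean_space set"
  assumes "compact S" "F face_of convex hull S"
  shows "F = convex hull (F \<inter> S)"
proof
  obtain T where T: "T \<subseteq> S" "F = convex hull T"
    using face_of_convex_hull_subset[OF assms] by blast
  moreover have "T \<subseteq> F \<inter> S"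
    using T hull_subset[of T convex] by auto
  ultimately show "F \<subseteq> convex hull (F \<inter> S)"
    by (simp add: hull_mono)
  show "convex hull (F \<inter> S) \<subseteq> F"
    using face_of_imp_convex[OF assms(2)] by (simp add: hull_minimal)
qed

lemma face_of_convex_hull_insert_notin:
  fixes P :: "'a::euclidean_space set"
  assumes "compact P" "convex P" "F face_of convex hull (insert v P)" "v \<notin> F"
  shows "F face_of P"
proof -
  have "F = convex hull (F \<inter> insert v P)"
    using face_of_convex_hull_eq_convex_hull_Int[OF _ assms(3)] assms(1) by simp
  moreover have "F \<inter> insert v P \<subseteq> P"
    using assms(4) by blast
  ultimately have "F \<subseteq> P"
    using hull_minimal[of _ P convex] assms(2) by metis
  then show ?thesis
    using face_of_subset[OF assms(3)] hull_subset[of "insert v P" convex] by blast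
qed

lemma face_of_convex_hull_insert_mem:
  fixes P :: "'a::euclidean_space set"
  assumes "compact P" "convex P" "F face_of convex hull (insert v P)" "v \<in> F"
  shows "(F \<inter> P) face_of P" "F = convex hull (insert v (F \<inter> P))"
proof -
  show "(F \<inter> P) face_of P"
    using face_of_slice[OF assms(3,2)] hull_subset[of "insert v P" convex]
    by (simp add: Int_absorb1)
  show "F = convex hull (insert v (F \<inter> P))"
    using face_of_convex_hull_eq_convex_hull_Int[OF _ assms(3)] assms(1,4)
    by (simp add: Int_insert_right_if1)
qed

lemma k_simplicial_convex_hull_insert:
  fixes P :: "'a::euclidean_space set"
  assumes "polytope P" "k_simplicial k P" "int k \<le> aff_dim P"
    and "\<And>G. G face_of P \<Longrightarrow> aff_dim G = int k \<Longrightarrow> v \<notin> affine hull G"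
  shows "k_simplicial k (convex hull (insert v P))"
  unfolding k_simplicial_def
proof (intro allI impI, elim conjE)
  fix F
  assume F: "F face_of convex hull (insert v P)" and dim_F: "aff_dim F = int k"
  have P: "compact P" "convex P"
    using assms(1) polytope_imp_compact polytope_imp_convex by auto
  show "int k simplex F"
  proof (cases "v \<in> F")
    case False
    then have "F face_of P"
      using face_of_convex_hull_insert_notin[OF P F] by blast
    then show ?thesis
      using assms(2) dim_F unfolding k_simplicial_def by blast
  next
    case True
    define G where "G = F \<inter> P"
    have G: "G face_of P" and F_G: "F = convex hull (insert v G)"
      using face_of_convex_hull_insert_mem[OF P F True] unfolding G_def by auto
    have dim_insert: "aff_dim (insert v G) = int k"
      using dim_F F_G aff_dim_convex_hull by metis
    have v_G: "v \<notin> affine hull G"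
    proof
      assume "v \<in> affine hull G"
      then have "aff_dim G = int k"
        by (metis aff_dim_insert dim_insert)
      then show False
        using assms(4)[OF G] \<open>v \<in> affine hull G\<close> by blast
    qed
    then have dim_G: "aff_dim G = int k - 1"
      using dim_insert by (simp add: aff_dim_insert)
    show ?thesis
    proof (cases "G = {}")
      case True
      then show ?thesis
        using F_G dim_F by simp
    next
      case False
      then have "(int k - 1) simplex G"
        using k_simplicial_face_simplex[OF assms(1,2) G False] dim_G assms(3) by simp
      then have "(int k - 1 + 1) simplex F"
        using simplex_insert_dimplus1[OF _ v_G] F_G by blast
      then show ?thesis
        by simp
    qed
  qed
qed

lemma affine_hull_Int_facets_eq:
  fixes P :: "'a::euclidean_space set"
  assumes "convex P" "F1 facet_of P" "F2 facet_of P" "F1 \<noteq> F2"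
    and "T \<subseteq> F1 \<inter> F2" "aff_dim T = aff_dim P - 2"
  shows "affine hull F1 \<inter> affine hull F2 = affine hull T"
proof -
  define A where "A = affine hull F1 \<inter> affine hull F2"
  have affine_A: "affine A"
    unfolding A_def by (simp add: affine_Int)
  have T_A: "T \<subseteq> A"
    using assms(5) hull_subset[of F1 affine] hull_subset[of F2 affine] unfolding A_def by blast
  have "A \<noteq> affine hull F1"
  proof
    assume "A = affine hull F1"
    then have "affine hull F1 \<subseteq> affine hull F2"
      unfolding A_def by blast
    moreover have "aff_dim F1 = aff_dim F2"
      using assms(2,3) unfolding facet_of_def by simp
    ultimately have "affine hull F1 = affine hull F2"
      by (metis aff_dim_affine_hull aff_dim_eq_full_gen hull_hull)
    then have "F1 = F2"
      using face_of_imp_eq_affine_Int[OF assms(1) facet_of_imp_face_of[OF assms(2)]]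
        face_of_imp_eq_affine_Int[OF assms(1) facet_of_imp_face_of[OF assms(3)]] by simp
    then show False
      using assms(4) by simp
  qed
  then have "A \<subset> affine hull F1"
    unfolding A_def by blast
  then have "aff_dim A < aff_dim F1"
    using affine_A by (metis aff_dim_psubset affine_hull_eq)
  then have "aff_dim A \<le> aff_dim T"
    using assms(2,6) unfolding facet_of_def by simp
  then have "aff_dim T = aff_dim A"
    using aff_dim_subset[OF T_A] by simp
  then have "affine hull T = affine hull A"
    using aff_dim_eq_full_gen[OF T_A] by simp
  also have "\<dots> = A"
    using affine_A by (simp add: affine_hull_eq)
  finally show ?thesis
    unfolding A_def ..
qed

lemma face_of_Int_aff_dim_less:
  fixes S :: "'a::euclidean_space set"
  assumes "F1 face_of S" "F2 face_of S" "aff_dim F1 = aff_dim F2" "F1 \<noteq> F2"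
  shows "aff_dim (F1 \<inter> F2) < aff_dim F1"
proof -
  have "F1 \<inter> F2 face_of F1"
    using face_of_subset[OF face_of_Int[OF assms(1,2)] inf_le1 face_of_imp_subset[OF assms(1)]] .
  moreover have "F1 \<inter> F2 \<noteq> F1"
  proof
    assume "F1 \<inter> F2 = F1"
    then have "F1 face_of F2"
      using face_of_subset[OF assms(1) _ face_of_imp_subset[OF assms(2)]] by blast
    then show False
      using face_of_aff_dim_lt[OF face_of_imp_convex[OF assms(2)] _ assms(4)] assms(3) by simp
  qed
  ultimately show ?thesis
    by (rule face_of_aff_dim_lt[OF face_of_imp_convex[OF assms(1)]])
qed

lemma card_Int_distinct_subsets_Suc_card:
  assumes "finite B" "C1 \<subseteq> B" "C2 \<subseteq> B" "C1 \<noteq> C2"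
    and "Suc (card C1) = card B" "Suc (card C2) = card B"
  shows "card (C1 \<inter> C2) + 2 = card B"
proof -
  have finite_C: "finite C1" "finite C2"
    using assms(1-3) finite_subset by auto
  have "\<not> C2 \<subseteq> C1"
  proof
    assume "C2 \<subseteq> C1"
    moreover have "card C2 = card C1"
      using assms(5,6) by simp
    ultimately have "C2 = C1"
      by (rule card_subset_eq[OF finite_C(1)])
    then show False
      using assms(4) by simp
  qed
  then have "card C1 < card (C1 \<union> C2)"
    using finite_C by (intro psubset_card_mono) auto
  moreover have "card (C1 \<union> C2) \<le> card B"
    using assms(1-3) by (intro card_mono) auto
  moreover have "card (C1 \<union> C2) + card (C1 \<inter> C2) = card C1 + card C2"
    using card_Un_Int[OF finite_C] by simp
  ultimately show ?thesis
    using assms(5,6) by linarith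
qed

lemma simplex_faces_Int_aff_dim:
  fixes S :: "'a::euclidean_space set"
  assumes "n simplex S" "F1 face_of S" "F2 face_of S"
    and "aff_dim F1 = n - 1" "aff_dim F2 = n - 1" "F1 \<noteq> F2"
  shows "aff_dim (F1 \<inter> F2) = n - 2"
proof -
  obtain B where B: "\<not> affine_dependent B" "int (card B) = n + 1" "S = convex hull B"
    using assms(1) unfolding simplex_def by blast
  have card_eq: "int (card C) = aff_dim (convex hull C) + 1" if "C \<subseteq> B" for C
  proof -
    have "\<not> affine_dependent C"
      using B(1) that affine_dependent_subset by blast
    then show ?thesis
      by (simp add: aff_dim_affine_independent aff_dim_convex_hull)
  qed
  obtain C1 where C1: "C1 \<subseteq> B" "F1 = convex hull C1"
    using assms(2) B(1,3) face_of_convex_hull_affine_independent by blast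
  obtain C2 where C2: "C2 \<subseteq> B" "F2 = convex hull C2"
    using assms(3) B(1,3) face_of_convex_hull_affine_independent by blast
  have "int (card C1) = n" "int (card C2) = n"
    using card_eq[OF C1(1)] card_eq[OF C2(1)] assms(4,5) unfolding C1(2) C2(2) by simp_all
  then have "Suc (card C1) = card B" "Suc (card C2) = card B"
    using B(2) by linarith+
  moreover have "C1 \<noteq> C2"
    using C1(2) C2(2) assms(6) by blast
  ultimately have "card (C1 \<inter> C2) + 2 = card B"
    using card_Int_distinct_subsets_Suc_card[OF aff_independent_finite[OF B(1)] C1(1) C2(1)]
    by blast
  moreover have "C1 \<inter> C2 \<subseteq> B"
    using C1(1) by blast
  ultimately have "aff_dim (convex hull (C1 \<inter> C2)) = n - 2"
    using card_eq[of "C1 \<inter> C2"] B(2) by linarith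
  moreover have "aff_dim (convex hull (C1 \<inter> C2)) \<le> aff_dim (F1 \<inter> F2)"
    unfolding C1(2) C2(2) by (intro aff_dim_subset) (simp add: hull_mono)
  moreover have "aff_dim (F1 \<inter> F2) < n - 1"
    using face_of_Int_aff_dim_less[OF assms(2,3)] assms(4-6) by simp
  ultimately show ?thesis
    by linarith
qed

lemma face_subset_adjacent_facets:
  fixes P G :: "'a::euclidean_space set"
  assumes "polytope P" "G face_of P" "G \<noteq> {}" "aff_dim G \<le> aff_dim P - 2"
  obtains F1 F2 where "adjacent_facets P F1 F2" "G \<subseteq> F1" "G \<subseteq> F2"
proof -
  obtain R where R: "R face_of P" "G \<subseteq> R" "aff_dim R = aff_dim P - 2"
    using face_of_polytope_superface_aff_dim[OF assms(1-3), of "aff_dim P - 2"] assms(4) by auto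
  have polyhedron_P: "polyhedron P"
    using assms(1) polytope_imp_polyhedron by blast
  have R_ne: "R \<noteq> {}" "R \<noteq> P"
    using R assms(3) by auto
  obtain F1 where F1: "F1 facet_of P" "R \<subseteq> F1"
    using face_of_polyhedron_subset_facet[OF polyhedron_P R(1) R_ne] by blast
  obtain F2 where F2: "F2 facet_of P" "R \<subseteq> F2" "F2 \<noteq> F1"
  proof (rule ccontr)
    assume "\<not> thesis"
    then have "{F. F facet_of P \<and> R \<subseteq> F} = {F1}"
      using that F1 by blast
    then have "R = F1"
      using face_of_polyhedron[OF polyhedron_P R(1) R_ne] by simp
    then show False
      using R(3) F1(1) unfolding facet_of_def by simp
  qed
  have "aff_dim (F1 \<inter> F2) < aff_dim P - 1"
    using face_of_Int_aff_dim_less[OF facet_of_imp_face_of[OF F1(1)] facet_of_imp_face_of[OF F2(1)]]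
      F1(1) F2 unfolding facet_of_def by auto
  moreover have "aff_dim R \<le> aff_dim (F1 \<inter> F2)"
    using F1(2) F2(2) by (simp add: aff_dim_subset)
  ultimately have "adjacent_facets P F1 F2"
    unfolding adjacent_facets_def using F1(1) F2 R(3) by auto
  then show ?thesis
    using that R(2) F1(2) F2(2) by blast
qed

lemma adjacent_facets_Int_face_of:
  assumes "S facet_of P" "adjacent_facets P S F"
  shows "(S \<inter> F) face_of P" "(S \<inter> F) face_of S"
proof -
  have "S face_of P" "F face_of P"
    using assms facet_of_imp_face_of unfolding adjacent_facets_def by blast+
  then show "(S \<inter> F) face_of P"
    by (rule face_of_Int)
  then show "(S \<inter> F) face_of S"
    using face_of_subset \<open>S face_of P\<close> face_of_imp_subset by blast
qed

lemma nonsimple_adjacent_facets_Int_eq: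
  fixes P S :: "'a::euclidean_space set"
  assumes "aff_dim P = int DIM('a)" "simplex_facet P S" "nonsimple P S FF"
    and "F1 \<in> FF" "F2 \<in> FF" "adjacent_facets P F1 F2"
  shows "S \<inter> F1 = S \<inter> F2"
proof (rule ccontr)
  assume ne: "S \<inter> F1 \<noteq> S \<inter> F2"
  have S: "S facet_of P" "(aff_dim P - 1) simplex S"
    using assms(2) unfolding simplex_facet_def by auto
  have S_F: "adjacent_facets P S F1" "adjacent_facets P S F2"
    using assms(3-5) unfolding nonsimple_def adj_def by auto
  have "aff_dim (S \<inter> F1) = aff_dim P - 1 - 1" "aff_dim (S \<inter> F2) = aff_dim P - 1 - 1"
    using S_F unfolding adjacent_facets_def by simp_all
  then have "aff_dim ((S \<inter> F1) \<inter> (S \<inter> F2)) = aff_dim P - 1 - 2"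
    using simplex_faces_Int_aff_dim[OF S(2) adjacent_facets_Int_face_of(2)[OF S(1) S_F(1)]
        adjacent_facets_Int_face_of(2)[OF S(1) S_F(2)] _ _ ne] by blast
  then have "aff_dim ((S \<inter> F1) \<inter> (S \<inter> F2)) = int DIM('a) - 3"
    using assms(1) by simp
  moreover have "(S \<inter> F1) \<inter> (S \<inter> F2) face_of P"
    using face_of_Int adjacent_facets_Int_face_of(1)[OF S(1)] S_F by blast
  moreover have "(S \<inter> F1) \<inter> (S \<inter> F2) \<subseteq> F1" "(S \<inter> F1) \<inter> (S \<inter> F2) \<subseteq> F2"
    "(S \<inter> F1) \<inter> (S \<inter> F2) \<subseteq> S"
    by auto
  ultimately have "\<exists>K. K face_of P \<and> aff_dim K = int DIM('a) - 3 \<and> K \<subseteq> F1 \<and> K \<subseteq> F2 \<and> K \<subseteq> S"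
    by blast
  then show False
    using assms(3-6) unfolding nonsimple_def by blast
qed

lemma nonsimple_adjacent_affine_hulls_Int_subset:
  fixes P S :: "'a::euclidean_space set"
  assumes "convex P" "aff_dim P = int DIM('a)" "simplex_facet P S" "nonsimple P S FF"
    and "F1 \<in> FF" "F2 \<in> FF" "adjacent_facets P F1 F2"
  shows "affine hull F1 \<inter> affine hull F2 \<subseteq> affine hull S"
proof -
  have "aff_dim (S \<inter> F1) = aff_dim P - 2"
    using assms(4,5) unfolding nonsimple_def adj_def adjacent_facets_def by auto
  moreover have "S \<inter> F1 \<subseteq> F1 \<inter> F2"
    using nonsimple_adjacent_facets_Int_eq[OF assms(2-7)] by blast
  moreover have "F1 facet_of P" "F2 facet_of P" "F1 \<noteq> F2"
    using assms(7) unfolding adjacent_facets_def by auto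
  ultimately have "affine hull F1 \<inter> affine hull F2 = affine hull (S \<inter> F1)"
    using affine_hull_Int_facets_eq[OF assms(1)] by blast
  then show ?thesis
    using hull_mono[of "S \<inter> F1" S affine] by auto
qed

lemma V_region_affine_hull_facet_imp_mem:
  assumes "v \<in> V_region P S FF NN" "F facet_of P" "v \<in> affine hull F"
  shows "F \<in> FF"
proof -
  have "v \<notin> facet_minus P F" "v \<notin> facet_plus P F"
    using assms(3) unfolding facet_minus_def facet_plus_def by auto
  then show ?thesis
    using assms(1,2) unfolding V_region_def by blast
qed

lemma V_region_notin_affine_hull_face:
  fixes P S :: "'a::euclidean_space set"
  assumes "polytope P" "aff_dim P = int DIM('a)" "simplex_facet P S" "nonsimple P S FF"
    and "v \<in> V_region P S FF NN" "G face_of P" "aff_dim G \<le> aff_dim P - 2"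
  shows "v \<notin> affine hull G"
proof
  assume v_G: "v \<in> affine hull G"
  then have "G \<noteq> {}"
    by auto
  then obtain F1 F2 where F: "adjacent_facets P F1 F2" "G \<subseteq> F1" "G \<subseteq> F2"
    using face_subset_adjacent_facets[OF assms(1,6) _ assms(7)] by blast
  have "v \<in> affine hull F1" "v \<in> affine hull F2"
    using v_G F(2,3) hull_mono[of G _ affine] by auto
  moreover have "F1 \<in> FF" "F2 \<in> FF"
    using V_region_affine_hull_facet_imp_mem[OF assms(5)] calculation F(1)
    unfolding adjacent_facets_def by auto
  ultimately have "v \<in> affine hull S"
    using nonsimple_adjacent_affine_hulls_Int_subset[OF _ assms(2-4)] F(1) assms(1)
      polytope_imp_convex by blast
  moreover have "v \<in> facet_minus P S"
    using assms(5) unfolding V_region_def by blast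
  ultimately show False
    unfolding facet_minus_def by auto
qed

theorem theorem2p13:
  fixes P S :: "'a::euclidean_space set"
    and FF NN :: "'a set set"
    and k :: nat and v :: 'a
  assumes "DIM('a) \<ge> 3"
    and "1 \<le> k" and "k \<le> DIM('a) - 2"
    and "polytope P" and "aff_dim P = int DIM('a)"
    and "k_simplicial k P"
    and "simplex_facet P S"
    and "bounded_position P S"
    and "FF \<subseteq> adj P S" and "NN \<subseteq> adj P S" and "FF \<inter> NN = {}"
    and "nonsimple P S FF"
    and "v \<in> V_region P S FF NN"
  shows "k_simplicial k (convex hull (insert v P))"
proof -
  have k_le: "int k \<le> aff_dim P - 2"
    using assms(1,3,5) by linarith
  show ?thesis
  proof (rule k_simplicial_convex_hull_insert[OF assms(4,6)])
    show "int k \<le> aff_dim P"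
      using k_le by simp
    show "v \<notin> affine hull G" if "G face_of P" "aff_dim G = int k" for G
      using V_region_notin_affine_hull_face[OF assms(4,5,7,12,13) that(1)] that(2) k_le by simp
  qed
qed

end
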